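(* Consider the system \[ \begin{aligned} \dot X_1^1&=\bigl(\mu_1(S_1^{in}-k_1X_1^1)-D_1\bigr)X_1^1,\quad \dot X_2^1=\bigl(\mu_2(S_2^{in}+k_2X_1^1-k_3X_2^1)-D_1\bigr)X_2^1,\\ \dot X_1^2&=D_2(X_1^1-X_1^2)+\mu_1(S_1^{in}-k_1X_1^2)X_1^2,\quad \dot X_2^2=D_2(X_2^1-X_2^2)+\mu_2(S_2^{in}+k_2X_1^2-k_3X_2^2)X_2^2, \end{aligned} \] with $\mu_1,\mu_2$ satisfying (H1), (H2), and assume the existence conditions of the respective steady state types hold. Then: \begin{itemize} \item The steady states of the types $\mathcal E_{00}^{kl}$, $\mathcal E_{10}^{1l}$ ($k=0,1$, $l=0,1,2$) and $\mathcal E_{01}^{01}$ are unique. \item There exists at least one steady state of the type $\mathcal E_{02}^{01}$; generically, the system has an odd number of steady states of the type $\mathcal E_{02}^{01}$. \item For $i=1,2$: if $X_2^{1*}>x_2^m$, the steady states of the types $\mathcal E_{0i}^{11}$ and $\mathcal E_{1i}^{11}$ are unique; if $X_2^{1*}<x_2^m$, there exists at least one steady state of the type $\mathcal E_{0i}^{11}$ and of the type $\mathcal E_{1i}^{11}$, and generically the system has an odd number of steady states of each of these types. Here $X_2^{1*}$ and $X_1^{2*}$ are the $X_2^1$- and $X_1^2$-components of the steady state considered and $x_2^m=(S_2^{in}+k_2X_1^{2*}-S_2^m)/k_3$. \end{itemize}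
   Context: Parameters $k_1,k_2,k_3>0$, $D>0$, $r\in(0,1)$, $r_1=r$, $r_2=1-r$, $D_1=D/r_1$, $D_2=D/r_2$, $S_1^{in},S_2^{in}\ge0$. (H1): $\mu_1\in C^1(\mathbb R_+)$, $\mu_1(0)=0$, $\mu_1(+\infty)=m_1$, $\mu_1'>0$ on $(0,\infty)$. (H2): $\mu_2\in C^1(\mathbb R_+)$, $\mu_2(0)=0$, $\mu_2(+\infty)=0$, and there is $S_2^m>0$ with $\mu_2'>0$ on $(0,S_2^m)$, $\mu_2'<0$ on $(S_2^m,\infty)$. For $i=1,2$: $\lambda_1^i$ solves $\mu_1(S)=D_i$ ($+\infty$ if $D\ge r_im_1$); $\lambda_2^{i1}\le\lambda_2^{i2}$ solve $\mu_2(S)=D_i$ ($+\infty$ if $D>r_i\mu_2(S_2^m)$); $F_{ij}=\lambda_1^i+\frac{k_1}{k_2}(\lambda_2^{ij}-S_2^{in})$. Steady state types (for $i=1,2$) with existence conditions: $\mathcal E_{00}^{00}=(0,0,0,0)$ (always); $\mathcal E_{00}^{0i}=(0,0,0,(S_2^{in}-\lambda_2^{2i})/k_3)$ ($S_2^{in}>\lambda_2^{2i}$); $\mathcal E_{00}^{10}=(0,0,(S_1^{in}-\lambda_1^2)/k_1,0)$ ($S_1^{in}>\lambda_1^2$); $\mathcal E_{00}^{1i}=(0,0,(S_1^{in}-\lambda_1^2)/k_1,k_2(S_1^{in}-F_{2i})/(k_1k_3))$ ($S_1^{in}>\max(\lambda_1^2,F_{2i})$); $\mathcal E_{10}^{10}=((S_1^{in}-\lambda_1^1)/k_1,0,X_1^{2*},0)$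 and $\mathcal E_{10}^{1i}=((S_1^{in}-\lambda_1^1)/k_1,0,X_1^{2*},(S_2^{in}+k_2X_1^{2*}-\lambda_2^{2i})/k_3)$, where $X_1^{2*}$ solves $\mu_1(S_1^{in}-k_1x)=D_2(x-X_1^{1*})/x$ with $X_1^{1*}=(S_1^{in}-\lambda_1^1)/k_1$ (exist iff $S_1^{in}>\lambda_1^1$, resp. additionally $S_2^{in}+k_2X_1^{2*}>\lambda_2^{2i}$); $\mathcal E_{0i}^{01}=(0,X_2^{1*},0,X_2^{2*})$ with $X_2^{1*}=(S_2^{in}-\lambda_2^{1i})/k_3$ and $X_2^{2*}$ a solution of $\mu_2(S_2^{in}-k_3x)=D_2(x-X_2^{1*})/x$ ($S_2^{in}>\lambda_2^{1i}$); $\mathcal E_{0i}^{11}=(0,X_2^{1*},X_1^{2*},X_2^{2*})$ with $X_2^{1*}=(S_2^{in}-\lambda_2^{1i})/k_3$, $X_1^{2*}=(S_1^{in}-\lambda_1^2)/k_1$, $X_2^{2*}$ a solution of $\mu_2(S_2^{in}+k_2X_1^{2*}-k_3x)=D_2(x-X_2^{1*})/x$ ($S_1^{in}>\lambda_1^2$, $S_2^{in}>\lambda_2^{1i}$); $\mathcal E_{1i}^{11}=(X_1^{1*},X_2^{1*},X_1^{2*},X_2^{2*})$ with $X_1^{1*}=(S_1^{in}-\lambda_1^1)/k_1$, $X_2^{1*}=k_2(S_1^{in}-F_{1i})/(k_1k_3)$, $X_1^{2*}$ solving $\mu_1(S_1^{in}-k_1x)=D_2(x-X_1^{1*})/x$,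 $X_2^{2*}$ a solution of $\mu_2(S_2^{in}+k_2X_1^{2*}-k_3x)=D_2(x-X_2^{1*})/x$ ($S_1^{in}>\max(\lambda_1^1,F_{1i})$). "Type" means the family of all steady states of the given form. *)

theory Defs
  imports "HOL-Analysis.Analysis" "HOL-Library.Extended_Real"
begin

record cparams =
  mu1 :: "real \<Rightarrow> real"
  mu2 :: "real \<Rightarrow> real"
  m1 :: real       \<comment> \<open>limit of mu1 at infinity\<close>
  S2m :: real      \<comment> \<open>maximiser of mu2\<close>
  k1 :: real
  k2 :: real
  k3 :: real
  D :: real
  r :: real
  S1in :: real
  S2in :: real

definition C1_nonneg :: "(real \<Rightarrow> real) \<Rightarrow> bool" where
  "C1_nonneg f \<longleftrightarrow> (\<exists>f'. continuous_on {0..} f' \<and>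
      (\<forall>x\<ge>0. (f has_real_derivative f' x) (at x within {0..})))"

definition rr :: "cparams \<Rightarrow> nat \<Rightarrow> real" where
  "rr P i = (if i = 1 then r P else 1 - r P)"

definition Dd :: "cparams \<Rightarrow> nat \<Rightarrow> real" where
  "Dd P i = D P / rr P i"

definition lam1 :: "cparams \<Rightarrow> nat \<Rightarrow> ereal" where
  "lam1 P i = (if D P \<ge> rr P i * m1 P then \<infinity>
     else ereal (THE S. 0 \<le> S \<and> mu1 P S = Dd P i))"

definition lam2 :: "cparams \<Rightarrow> nat \<Rightarrow> nat \<Rightarrow> ereal" where
  "lam2 P i j = (if D P > rr P i * mu2 P (S2m P) then \<infinity>
     else if j = 1 then ereal (THE S. 0 \<le> S \<and> S \<le> S2m P \<and> mu2 P S = Dd P i)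
     else ereal (THE S. S2m P \<le> S \<and> mu2 P S = Dd P i))"

definition FF :: "cparams \<Rightarrow> nat \<Rightarrow> nat \<Rightarrow> ereal" where
  "FF P i j = lam1 P i + ereal (k1 P / k2 P) * (lam2 P i j - ereal (S2in P))"

text \<open>Steady states (X_1^1, X_2^1, X_1^2, X_2^2) of the system, in the closed
  physical domain (nonnegative biomasses and substrate concentrations).\<close>
definition steady :: "cparams \<Rightarrow> real \<times> real \<times> real \<times> real \<Rightarrow> bool" where
  "steady P p = (case p of (x11, x21, x12, x22) \<Rightarrow>
      0 \<le> x11 \<and> 0 \<le> x21 \<and> 0 \<le> x12 \<and> 0 \<le> x22 \<and>
      0 \<le> S1in P - k1 P * x11 \<and> 0 \<le> S1in P - k1 P * x12 \<and>
      0 \<le> S2in P + k2 P * x11 - k3 P * x21 \<and> 0 \<le> S2in P + k2 P * x12 - k3 P * x22 \<and>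
      (mu1 P (S1in P - k1 P * x11) - Dd P 1) * x11 = 0 \<and>
      (mu2 P (S2in P + k2 P * x11 - k3 P * x21) - Dd P 1) * x21 = 0 \<and>
      Dd P 2 * (x11 - x12) + mu1 P (S1in P - k1 P * x12) * x12 = 0 \<and>
      Dd P 2 * (x21 - x22) + mu2 P (S2in P + k2 P * x12 - k3 P * x22) * x22 = 0)"

abbreviation L1 :: "cparams \<Rightarrow> nat \<Rightarrow> real" where "L1 P i \<equiv> real_of_ereal (lam1 P i)"
abbreviation L2 :: "cparams \<Rightarrow> nat \<Rightarrow> nat \<Rightarrow> real" where "L2 P i j \<equiv> real_of_ereal (lam2 P i j)"

definition X11s :: "cparams \<Rightarrow> real" where
  "X11s P = (S1in P - L1 P 1) / k1 P"

definition E00_00 :: "cparams \<Rightarrow> (real \<times> real \<times> real \<times> real) set" where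
  "E00_00 P = {p. steady P p \<and> p = (0, 0, 0, 0)}"

definition E00_0 :: "cparams \<Rightarrow> nat \<Rightarrow> (real \<times> real \<times> real \<times> real) set" where
  "E00_0 P i = {p. steady P p \<and> p = (0, 0, 0, (S2in P - L2 P 2 i) / k3 P)}"

definition E00_10 :: "cparams \<Rightarrow> (real \<times> real \<times> real \<times> real) set" where
  "E00_10 P = {p. steady P p \<and> p = (0, 0, (S1in P - L1 P 2) / k1 P, 0)}"

definition E00_1 :: "cparams \<Rightarrow> nat \<Rightarrow> (real \<times> real \<times> real \<times> real) set" where
  "E00_1 P i = {p. steady P p \<and> p = (0, 0, (S1in P - L1 P 2) / k1 P,
       k2 P * (S1in P - real_of_ereal (FF P 2 i)) / (k1 P * k3 P))}"

definition E10_10 :: "cparams \<Rightarrow> (real \<times> real \<times> real \<times> real) set" where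
  "E10_10 P = {p. steady P p \<and> (\<exists>x. p = (X11s P, 0, x, 0) \<and>
       mu1 P (S1in P - k1 P * x) = Dd P 2 * (x - X11s P) / x)}"

definition E10_1 :: "cparams \<Rightarrow> nat \<Rightarrow> (real \<times> real \<times> real \<times> real) set" where
  "E10_1 P i = {p. steady P p \<and> (\<exists>x. p = (X11s P, 0, x, (S2in P + k2 P * x - L2 P 2 i) / k3 P) \<and>
       mu1 P (S1in P - k1 P * x) = Dd P 2 * (x - X11s P) / x)}"

definition E0_01 :: "cparams \<Rightarrow> nat \<Rightarrow> (real \<times> real \<times> real \<times> real) set" where
  "E0_01 P i = {p. steady P p \<and> (\<exists>x. p = (0, (S2in P - L2 P 1 i) / k3 P, 0, x) \<and>
       mu2 P (S2in P - k3 P * x) = Dd P 2 * (x - (S2in P - L2 P 1 i) / k3 P) / x)}"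

definition E0_11 :: "cparams \<Rightarrow> nat \<Rightarrow> (real \<times> real \<times> real \<times> real) set" where
  "E0_11 P i = {p. steady P p \<and> (\<exists>x. p = (0, (S2in P - L2 P 1 i) / k3 P, (S1in P - L1 P 2) / k1 P, x) \<and>
       mu2 P (S2in P + k2 P * ((S1in P - L1 P 2) / k1 P) - k3 P * x)
         = Dd P 2 * (x - (S2in P - L2 P 1 i) / k3 P) / x)}"

definition E1_11 :: "cparams \<Rightarrow> nat \<Rightarrow> (real \<times> real \<times> real \<times> real) set" where
  "E1_11 P i = {p. steady P p \<and> (\<exists>y x.
       p = (X11s P, k2 P * (S1in P - real_of_ereal (FF P 1 i)) / (k1 P * k3 P), y, x) \<and>
       mu1 P (S1in P - k1 P * y) = Dd P 2 * (y - X11s P) / y \<and>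
       mu2 P (S2in P + k2 P * y - k3 P * x)
         = Dd P 2 * (x - k2 P * (S1in P - real_of_ereal (FF P 1 i)) / (k1 P * k3 P)) / x)}"

text \<open>x_2^m for a steady state whose X_1^2-component is c.\<close>
definition x2m :: "cparams \<Rightarrow> real \<Rightarrow> real" where
  "x2m P c = (S2in P + k2 P * c - S2m P) / k3 P"

text \<open>Genericity: every steady state (x11,x21,x12,x22) in T is a transversal
  (nondegenerate) zero, in x = x22, of the scalar equation
  mu2(S2in + k2 x12 - k3 x) - D2 (x - x21)/x = 0 defining X_2^{2*}.\<close>
definition nondeg :: "cparams \<Rightarrow> (real \<times> real \<times> real \<times> real) set \<Rightarrow> bool" where
  "nondeg P T \<longleftrightarrow> (\<forall>(x11, x21, x12, x22) \<in> T.
      deriv (\<lambda>x. mu2 P (S2in P + k2 P * x12 - k3 P * x) - Dd P 2 * (x - x21) / x) x22 \<noteq> 0)"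

end

(* Steady states are built component by component. X_1^1 and X_2^1 are 0 or determined by the
   break-even concentrations lambda of the first tank. In the second tank each biomass x, given
   the earlier components, solves a balance equation D_2 (X - x) + mu(A - k x) x = 0, where X is
   the inflow of that species from the first tank and A - k x the substrate level. For X > 0 the
   function g x = mu(A - k x) - D_2 (x - X) / x is positive at X and negative at A / k, so a root
   exists. It is unique when mu increases on [0, A - k X] (always for mu1; for mu2 when the
   substrate level stays below its maximiser, i.e. X_2^{1*} > x_2^m), and when all roots are
   transversal each of them flips the sign of g, so their number is odd. *)

theory Submission
  imports Defs
begin

section \<open>Transversal zeros of a real function\<close>

lemma transversal_zero_sign_change:
  fixes g :: "real \<Rightarrow> real"
  assumes "(g has_real_derivative d) (at z)" "d \<noteq> 0" "g z = 0"
  obtains \<delta> where "\<delta> > 0" "\<And>h. 0 < h \<Longrightarrow> h < \<delta> \<Longrightarrow> g (z - h) * g (z + h) < 0"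
proof (cases "d > 0")
  case True
  obtain d1 where "d1 > 0" "\<And>h. 0 < h \<Longrightarrow> h < d1 \<Longrightarrow> g z < g (z + h)"
    using DERIV_pos_inc_right[OF assms(1) True] by blast
  moreover obtain d2 where "d2 > 0" "\<And>h. 0 < h \<Longrightarrow> h < d2 \<Longrightarrow> g (z - h) < g z"
    using DERIV_pos_inc_left[OF assms(1) True] by blast
  ultimately show thesis
    using that[of "min d1 d2"] assms(3) by (auto simp: mult_less_0_iff)
next
  case False
  then have "d < 0" using assms(2) by simp
  obtain d1 where "d1 > 0" "\<And>h. 0 < h \<Longrightarrow> h < d1 \<Longrightarrow> g (z + h) < g z"
    using DERIV_neg_dec_right[OF assms(1) \<open>d < 0\<close>] by blast
  moreover obtain d2 where "d2 > 0" "\<And>h. 0 < h \<Longrightarrow> h < d2 \<Longrightarrow> g z < g (z - h)"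
    using DERIV_neg_dec_left[OF assms(1) \<open>d < 0\<close>] by blast
  ultimately show thesis
    using that[of "min d1 d2"] assms(3) by (auto simp: mult_less_0_iff)
qed

lemma finite_transversal_zeros:
  fixes g :: "real \<Rightarrow> real"
  assumes "continuous_on {a..b} g"
    and transversal: "\<And>z. z \<in> {a..b} \<Longrightarrow> g z = 0 \<Longrightarrow> \<exists>d. (g has_real_derivative d) (at z) \<and> d \<noteq> 0"
  shows "finite {z \<in> {a..b}. g z = 0}"
proof (rule ccontr)
  let ?Z = "{z \<in> {a..b}. g z = 0}"
  assume "infinite ?Z"
  moreover have "compact ?Z"
    unfolding compact_eq_bounded_closed
  proof
    show "bounded ?Z" by (rule bounded_subset[of "{a..b}"]) auto
    show "closed ?Z" using continuous_closed_preimage_constant[OF assms(1)] by simp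
  qed
  ultimately obtain x where x: "x \<in> ?Z" "x islimpt ?Z"
    unfolding compact_eq_Bolzano_Weierstrass by blast
  then obtain d where "(g has_real_derivative d) (at x)" "d \<noteq> 0" using transversal by blast
  then obtain \<delta> where \<delta>: "\<delta> > 0" "\<And>h. 0 < h \<Longrightarrow> h < \<delta> \<Longrightarrow> g (x - h) * g (x + h) < 0"
    using transversal_zero_sign_change x(1) by blast
  obtain y where y: "y \<in> ?Z" "y \<noteq> x" "\<bar>y - x\<bar> < \<delta>"
    using x(2) \<delta>(1) unfolding islimpt_approachable dist_real_def by blast
  then have "g (x - \<bar>y - x\<bar>) * g (x + \<bar>y - x\<bar>) < 0" using \<delta>(2) by simp
  moreover have "y = x - \<bar>y - x\<bar> \<or> y = x + \<bar>y - x\<bar>" by linarith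
  ultimately show False using y(1) by auto
qed

lemma same_sign_if_no_zeros:
  fixes g :: "real \<Rightarrow> real"
  assumes "a \<le> b" "continuous_on {a..b} g" "\<And>z. z \<in> {a..b} \<Longrightarrow> g z \<noteq> 0"
  shows "g a * g b > 0"
proof (rule ccontr)
  assume "\<not> g a * g b > 0"
  then have "g a \<le> 0 \<and> 0 \<le> g b \<or> g b \<le> 0 \<and> 0 \<le> g a" by (auto simp: zero_less_mult_iff)
  then obtain z where "z \<in> {a..b}" "g z = 0"
    using IVT'[of g a 0 b] IVT2'[of g b 0 a] assms(1,2) by auto
  then show False using assms(3) by blast
qed

lemma zeros_beyond_first_zero:
  fixes g :: "real \<Rightarrow> real"
  assumes "continuous_on {a..b} g" "g a \<noteq> 0" "g b \<noteq> 0"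
    and finite: "finite {z \<in> {a..b}. g z = 0}" and nonempty: "{z \<in> {a..b}. g z = 0} \<noteq> {}"
    and transversal: "\<And>z. z \<in> {a..b} \<Longrightarrow> g z = 0 \<Longrightarrow> \<exists>d. (g has_real_derivative d) (at z) \<and> d \<noteq> 0"
  obtains c where "a < c" "c < b" "g a * g c < 0"
    "{w \<in> {c..b}. g w = 0} = {z \<in> {a..b}. g z = 0} - {Min {z \<in> {a..b}. g z = 0}}"
proof -
  define Z where "Z = {z \<in> {a..b}. g z = 0}"
  define z where "z = Min Z"
  have "finite Z" "Z \<noteq> {}" unfolding Z_def using finite nonempty by auto
  then have z: "z \<in> Z" "\<And>w. w \<in> Z \<Longrightarrow> z \<le> w" unfolding z_def by auto
  then have "z \<in> {a..b}" "g z = 0" "a < z" "z < b"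
    using assms(2,3) unfolding Z_def by (auto simp: le_less)
  then obtain d where "(g has_real_derivative d) (at z)" "d \<noteq> 0"
    using transversal by blast
  then obtain \<delta> where \<delta>: "\<delta> > 0" "\<And>h. 0 < h \<Longrightarrow> h < \<delta> \<Longrightarrow> g (z - h) * g (z + h) < 0"
    using transversal_zero_sign_change \<open>g z = 0\<close> by blast
  define h where "h = min \<delta> (min (z - a) (b - z)) / 2"
  have "0 < h" "h \<le> \<delta> / 2" "h \<le> (z - a) / 2" "h \<le> (b - z) / 2"
    using \<delta>(1) \<open>a < z\<close> \<open>z < b\<close> unfolding h_def by auto
  then have h: "0 < h" "h < \<delta>" "a < z - h" "z + h < b"
    using \<delta>(1) \<open>a < z\<close> \<open>z < b\<close> by (auto simp: field_simps)
  have "g a * g (z - h) > 0"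
  proof (rule same_sign_if_no_zeros[of a "z - h" g])
    show "continuous_on {a..z - h} g"
      using assms(1) by (rule continuous_on_subset) (use h \<open>z < b\<close> in auto)
    show "g w \<noteq> 0" if "w \<in> {a..z - h}" for w
      using z(2)[of w] that h \<open>z < b\<close> unfolding Z_def by fastforce
  qed (use h in auto)
  moreover have "g (z - h) * g (z + h) < 0" using \<delta>(2) h by blast
  ultimately have "g a * g (z + h) < 0" by (auto simp: zero_less_mult_iff mult_less_0_iff)
  moreover have "{w \<in> {z + h..b}. g w = 0} = Z - {z}"
  proof (intro set_eqI iffI)
    fix w assume w: "w \<in> Z - {z}"
    then have "z < w" using z(2) by force
    moreover have "\<not> w - z < \<delta>"
      using \<delta>(2)[of "w - z"] w \<open>z < w\<close> unfolding Z_def by auto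
    ultimately show "w \<in> {w \<in> {z + h..b}. g w = 0}" using w h unfolding Z_def by auto
  qed (use h \<open>a < z\<close> in \<open>auto simp: Z_def\<close>)
  ultimately show thesis using that[of "z + h"] h unfolding Z_def z_def by auto
qed

lemma odd_card_zeros_iff_sign_change:
  fixes g :: "real \<Rightarrow> real"
  assumes "a \<le> b" "continuous_on {a..b} g" "g a \<noteq> 0" "g b \<noteq> 0"
    and "\<And>z. z \<in> {a..b} \<Longrightarrow> g z = 0 \<Longrightarrow> \<exists>d. (g has_real_derivative d) (at z) \<and> d \<noteq> 0"
  shows "odd (card {z \<in> {a..b}. g z = 0}) \<longleftrightarrow> g a * g b < 0"
proof -
  obtain n where "card {z \<in> {a..b}. g z = 0} = n" by blast
  then show ?thesis using assms
  proof (induction n arbitrary: a)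
    case 0
    have "finite {z \<in> {a..b}. g z = 0}"
      using finite_transversal_zeros 0 by blast
    then have "g z \<noteq> 0" if "z \<in> {a..b}" for z using 0 that by auto
    then show ?case using same_sign_if_no_zeros[of a b g] 0 by auto
  next
    case (Suc m)
    have finite: "finite {z \<in> {a..b}. g z = 0}"
      using finite_transversal_zeros Suc.prems by blast
    moreover have "{z \<in> {a..b}. g z = 0} \<noteq> {}"
      using Suc.prems(1) by (metis card.empty nat.distinct(1))
    ultimately have "Min {z \<in> {a..b}. g z = 0} \<in> {z \<in> {a..b}. g z = 0}" by (rule Min_in)
    obtain c where c: "a < c" "c < b" "g a * g c < 0"
      "{w \<in> {c..b}. g w = 0} = {z \<in> {a..b}. g z = 0} - {Min {z \<in> {a..b}. g z = 0}}"
      using zeros_beyond_first_zero finite \<open>{z \<in> {a..b}. g z = 0} \<noteq> {}\<close> Suc.prems(3-6)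
      by blast
    then have "card {w \<in> {c..b}. g w = 0} = m"
      using Suc.prems(1) finite \<open>Min {z \<in> {a..b}. g z = 0} \<in> {z \<in> {a..b}. g z = 0}\<close>
      by simp
    moreover have "continuous_on {c..b} g"
      using Suc.prems(3) by (rule continuous_on_subset) (use c in auto)
    moreover have "g c \<noteq> 0" using c(3) by auto
    ultimately have "odd m \<longleftrightarrow> g c * g b < 0"
      using Suc.IH[of c] Suc.prems(5,6) c(1,2) by auto
    then show ?case using c(3) Suc.prems(1,5) by (auto simp: zero_less_mult_iff mult_less_0_iff)
  qed
qed

section \<open>The balance equation of the second tank\<close>

locale tank_balance =
  fixes \<mu> :: "real \<Rightarrow> real" and D2 X k A :: real
  assumes \<mu>_continuous: "continuous_on {0..} \<mu>" and \<mu>_zero: "\<mu> 0 = 0"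
    and \<mu>_pos: "\<And>s. s > 0 \<Longrightarrow> \<mu> s > 0"
    and D2_pos: "D2 > 0" and X_pos: "X > 0" and k_pos: "k > 0" and inflow_pos: "A - k * X > 0"
begin

definition roots :: "real set" where
  "roots = {x. X < x \<and> x < A / k \<and> \<mu> (A - k * x) = D2 * (x - X) / x}"

lemma X_less_capacity: "X < A / k"
  using inflow_pos k_pos by (simp add: field_simps)

lemma balance_iff_roots:
  "(0 \<le> x \<and> 0 \<le> A - k * x \<and> D2 * (X - x) + \<mu> (A - k * x) * x = 0) \<longleftrightarrow> x \<in> roots"
proof
  assume x: "0 \<le> x \<and> 0 \<le> A - k * x \<and> D2 * (X - x) + \<mu> (A - k * x) * x = 0"
  have "\<mu> (A - k * x) \<ge> 0"
    using \<mu>_zero \<mu>_pos[of "A - k * x"] x by (cases "A - k * x = 0") auto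
  moreover have "D2 * (x - X) = \<mu> (A - k * x) * x" using x by (simp add: algebra_simps)
  ultimately have "D2 * (x - X) \<ge> 0" using x by simp
  then have "X \<le> x" using D2_pos by (simp add: zero_le_mult_iff)
  moreover have "x \<noteq> X"
    using x \<mu>_pos[of "A - k * X"] inflow_pos X_pos by auto
  ultimately have "X < x" by simp
  moreover have "A - k * x \<noteq> 0"
    using x \<mu>_zero D2_pos \<open>X < x\<close> by auto
  ultimately show "x \<in> roots"
    using x X_pos k_pos unfolding roots_def by (auto simp: field_simps)
next
  assume "x \<in> roots"
  then show "0 \<le> x \<and> 0 \<le> A - k * x \<and> D2 * (X - x) + \<mu> (A - k * x) * x = 0"
    using X_pos k_pos unfolding roots_def by (auto simp: field_simps)
qed

lemma continuous_on_balance: "continuous_on {X..A / k} (\<lambda>x. \<mu> (A - k * x) - D2 * (x - X) / x)"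
proof -
  have "continuous_on {X..A / k} (\<lambda>x. \<mu> (A - k * x))"
  proof (rule continuous_on_compose2[OF \<mu>_continuous])
    show "(\<lambda>x. A - k * x) ` {X..A / k} \<subseteq> {0..}" using k_pos by (auto simp: field_simps)
  qed (intro continuous_intros)
  then show ?thesis using X_pos by (intro continuous_intros) auto
qed

lemma balance_at_X: "\<mu> (A - k * X) - D2 * (X - X) / X > 0"
  using \<mu>_pos inflow_pos by simp

lemma balance_at_capacity: "\<mu> (A - k * (A / k)) - D2 * (A / k - X) / (A / k) < 0"
proof -
  have "A / k > 0" using X_pos X_less_capacity by linarith
  moreover have "D2 * (A / k - X) > 0" using D2_pos X_less_capacity by simp
  ultimately have "D2 * (A / k - X) / (A / k) > 0" by (rule divide_pos_pos[rotated])
  then show ?thesis using \<mu>_zero k_pos by simp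
qed

lemma zeros_balance_eq_roots:
  "{x \<in> {X..A / k}. \<mu> (A - k * x) - D2 * (x - X) / x = 0} = roots"
proof (intro set_eqI iffI)
  fix x assume x: "x \<in> {x \<in> {X..A / k}. \<mu> (A - k * x) - D2 * (x - X) / x = 0}"
  then have "x \<noteq> X" "x \<noteq> A / k" using balance_at_X balance_at_capacity by auto
  then show "x \<in> roots" using x unfolding roots_def by auto
qed (auto simp: roots_def)

lemma roots_nonempty: "roots \<noteq> {}"
proof -
  obtain x where "x \<in> {X..A / k}" "\<mu> (A - k * x) - D2 * (x - X) / x = 0"
    using IVT2'[OF balance_at_capacity[THEN less_imp_le] balance_at_X[THEN less_imp_le]
        less_imp_le[OF X_less_capacity] continuous_on_balance] by auto
  then show ?thesis using zeros_balance_eq_roots by blast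
qed

text \<open>On roots, \<mu>(A - k x) decreases in x while D2 (x - X)/x increases.\<close>
lemma roots_unique:
  assumes "strict_mono_on {0..A - k * X} \<mu>" "x \<in> roots" "y \<in> roots"
  shows "x = y"
proof -
  have False if "u \<in> roots" "v \<in> roots" "u < v" for u v
  proof -
    have "\<mu> (A - k * v) < \<mu> (A - k * u)"
      using that k_pos by (intro strict_mono_onD[OF assms(1)]) (auto simp: roots_def field_simps)
    moreover have "X / v \<le> X / u"
      using that X_pos by (intro divide_left_mono) (auto simp: roots_def)
    then have "D2 * (1 - X / u) \<le> D2 * (1 - X / v)"
      using D2_pos by (intro mult_left_mono) auto
    moreover have "\<mu> (A - k * w) = D2 * (1 - X / w)" if "w \<in> roots" for w
      using that X_pos by (auto simp: roots_def field_simps)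
    ultimately show False using that by auto
  qed
  then show ?thesis using assms(2,3) by (metis linorder_neqE_linordered_idom)
qed

lemma roots_finite_odd:
  assumes "\<And>z. z \<in> roots \<Longrightarrow>
    \<exists>d. ((\<lambda>x. \<mu> (A - k * x) - D2 * (x - X) / x) has_real_derivative d) (at z) \<and> d \<noteq> 0"
  shows "finite roots \<and> odd (card roots)"
proof -
  note sign_change = odd_card_zeros_iff_sign_change[OF less_imp_le[OF X_less_capacity]
      continuous_on_balance]
  have "odd (card roots)"
    using sign_change balance_at_X balance_at_capacity assms zeros_balance_eq_roots
    by (auto simp: mult_less_0_iff)
  then show ?thesis using card.infinite by fastforce
qed

end

section \<open>Steady states of the two-tank chemostat\<close>

lemma C1_nonneg_continuous_on:
  assumes "C1_nonneg f"
  shows "continuous_on {0..} f"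
proof -
  obtain f' where "\<forall>x\<ge>0. (f has_real_derivative f' x) (at x within {0..})"
    using assms unfolding C1_nonneg_def by blast
  then show ?thesis by (intro DERIV_continuous_on[of _ _ f']) auto
qed

lemma C1_nonneg_has_deriv:
  assumes "C1_nonneg f" "x > 0"
  shows "(f has_real_derivative deriv f x) (at x)"
proof -
  obtain f' where "\<forall>x\<ge>0. (f has_real_derivative f' x) (at x within {0..})"
    using assms(1) unfolding C1_nonneg_def by blast
  then have "(f has_real_derivative f' x) (at x within {0..})" using assms(2) by simp
  then have "(f has_real_derivative f' x) (at x within {0<..})"
    by (rule DERIV_subset) auto
  then have d: "(f has_real_derivative f' x) (at x)"
    using at_within_open[of x "{0<..}"] assms(2) by simp
  with DERIV_imp_deriv[OF d] show ?thesis by simp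
qed

lemma C1_nonneg_less_if_deriv_pos:
  assumes "C1_nonneg f" "0 \<le> u" "u < v" "\<And>x. u < x \<Longrightarrow> x < v \<Longrightarrow> deriv f x > 0"
  shows "f u < f v"
proof (rule DERIV_pos_imp_increasing_open[OF assms(3)])
  show "\<exists>y. (f has_real_derivative y) (at x) \<and> y > 0" if "u < x" "x < v" for x
  proof -
    have "x > 0" using that assms(2) by simp
    then show ?thesis using C1_nonneg_has_deriv[OF assms(1)] assms(4)[OF that] by blast
  qed
  show "continuous_on {u..v} f"
    using C1_nonneg_continuous_on[OF assms(1)] by (rule continuous_on_subset) (use assms in auto)
qed

lemma C1_nonneg_greater_if_deriv_neg:
  assumes "C1_nonneg f" "0 \<le> u" "u < v" "\<And>x. u < x \<Longrightarrow> x < v \<Longrightarrow> deriv f x < 0"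
  shows "f u > f v"
proof (rule DERIV_neg_imp_decreasing_open[OF assms(3)])
  show "\<exists>y. (f has_real_derivative y) (at x) \<and> y < 0" if "u < x" "x < v" for x
  proof -
    have "x > 0" using that assms(2) by simp
    then show ?thesis using C1_nonneg_has_deriv[OF assms(1)] assms(4)[OF that] by blast
  qed
  show "continuous_on {u..v} f"
    using C1_nonneg_continuous_on[OF assms(1)] by (rule continuous_on_subset) (use assms in auto)
qed

lemma C1_nonneg_balance_differentiable:
  assumes "C1_nonneg f" "A - k * z > 0" "z > 0"
  shows "(\<lambda>x. f (A - k * x) - c * (x - X) / x) differentiable (at z)"
proof -
  have "((\<lambda>x. f (A - k * x)) has_real_derivative deriv f (A - k * z) * (- k)) (at z)"
    by (rule DERIV_chain2[of f _ "\<lambda>x. A - k * x", OF C1_nonneg_has_deriv[OF assms(1,2)]])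
      (auto intro!: derivative_eq_intros)
  moreover have "((\<lambda>x. c * (x - X) / x) has_real_derivative (c * z - c * (z - X)) / (z * z)) (at z)"
    using assms(3) by (auto intro!: derivative_eq_intros simp: power2_eq_square)
  ultimately show ?thesis
    using DERIV_diff real_differentiable_def by blast
qed

definition steady_prefix :: "cparams \<Rightarrow> real \<Rightarrow> real \<Rightarrow> real \<Rightarrow> bool" where
  "steady_prefix P a b c \<longleftrightarrow>
      0 \<le> a \<and> 0 \<le> b \<and> 0 \<le> c \<and> 0 \<le> S1in P - k1 P * a \<and> 0 \<le> S1in P - k1 P * c \<and>
      0 \<le> S2in P + k2 P * a - k3 P * b \<and>
      (mu1 P (S1in P - k1 P * a) - Dd P 1) * a = 0 \<and>
      (mu2 P (S2in P + k2 P * a - k3 P * b) - Dd P 1) * b = 0 \<and>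
      Dd P 2 * (a - c) + mu1 P (S1in P - k1 P * c) * c = 0"

lemma steady_iff_prefix:
  "steady P (a, b, c, x) \<longleftrightarrow> steady_prefix P a b c \<and>
     0 \<le> x \<and> 0 \<le> S2in P + k2 P * c - k3 P * x \<and>
     Dd P 2 * (b - x) + mu2 P (S2in P + k2 P * c - k3 P * x) * x = 0"
  unfolding steady_def steady_prefix_def by auto

text \<open>The X_2^2 equation is the only steady-state condition involving X_2^2, so the steady
  states with first components (a, b, c) correspond to the roots of a tank_balance equation
  for mu2.\<close>
definition completions :: "cparams \<Rightarrow> real \<Rightarrow> real \<Rightarrow> real \<Rightarrow> (real \<times> real \<times> real \<times> real) set" where
  "completions P a b c = {p. steady P p \<and> (\<exists>x. p = (a, b, c, x) \<and>
     mu2 P (S2in P + k2 P * c - k3 P * x) = Dd P 2 * (x - b) / x)}"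

definition X21s :: "cparams \<Rightarrow> nat \<Rightarrow> real" where
  "X21s P i = k2 P * (S1in P - real_of_ereal (FF P 1 i)) / (k1 P * k3 P)"

text \<open>The threshold x_2^m enters only through this equivalence, and only for uniqueness.\<close>
lemma x2m_less_iff: "k3 P > 0 \<Longrightarrow> x2m P c < b \<longleftrightarrow> S2in P + k2 P * c - k3 P * b < S2m P"
  unfolding x2m_def by (simp add: field_simps)

locale chemostat =
  fixes P :: cparams
  assumes k1: "k1 P > 0" and k2: "k2 P > 0" and k3: "k3 P > 0"
    and D: "D P > 0" and r: "0 < r P" "r P < 1"
    and S1: "S1in P \<ge> 0" and S2: "S2in P \<ge> 0"
    and H1: "C1_nonneg (mu1 P)" "mu1 P 0 = 0" "(mu1 P \<longlongrightarrow> m1 P) at_top"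
            "\<forall>x>0. deriv (mu1 P) x > 0"
    and H2: "C1_nonneg (mu2 P)" "mu2 P 0 = 0" "(mu2 P \<longlongrightarrow> 0) at_top" "S2m P > 0"
            "\<forall>x. 0 < x \<and> x < S2m P \<longrightarrow> deriv (mu2 P) x > 0"
            "\<forall>x. x > S2m P \<longrightarrow> deriv (mu2 P) x < 0"
begin

lemma rr_pos: "rr P i > 0"
  using r unfolding rr_def by auto

lemma Dd_pos: "Dd P i > 0"
  using rr_pos D unfolding Dd_def by auto

lemma mu1_less: "0 \<le> u \<Longrightarrow> u < v \<Longrightarrow> mu1 P u < mu1 P v"
  using C1_nonneg_less_if_deriv_pos[OF H1(1)] H1(4) by simp

lemma mu2_less: "0 \<le> u \<Longrightarrow> u < v \<Longrightarrow> v \<le> S2m P \<Longrightarrow> mu2 P u < mu2 P v"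
  using C1_nonneg_less_if_deriv_pos[OF H2(1)] H2(5) by simp

lemma mu2_greater: "S2m P \<le> u \<Longrightarrow> u < v \<Longrightarrow> mu2 P v < mu2 P u"
  using C1_nonneg_greater_if_deriv_neg[OF H2(1)] H2(4,6) by simp

lemma mu1_strict_mono_on: "strict_mono_on {0..} (mu1 P)"
  using mu1_less by (intro strict_mono_onI) simp

lemma mu2_strict_mono_on: "strict_mono_on {0..S2m P} (mu2 P)"
  using mu2_less by (intro strict_mono_onI) simp

lemma mu1_pos: "s > 0 \<Longrightarrow> mu1 P s > 0"
  using mu1_less[of 0 s] H1(2) by simp

lemma mu2_pos: "s > 0 \<Longrightarrow> mu2 P s > 0"
proof (cases "s \<le> S2m P")
  case True
  then show "s > 0 \<Longrightarrow> ?thesis" using mu2_less[of 0 s] H2(2) by simp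
next
  case False
  have "mu2 P (s + 1) \<ge> 0"
  proof (rule tendsto_upperbound[OF H2(3)])
    show "\<forall>\<^sub>F y in at_top. mu2 P y \<le> mu2 P (s + 1)"
      unfolding eventually_at_top_linorder
    proof (intro exI allI impI)
      fix y assume "s + 1 \<le> y"
      then show "mu2 P y \<le> mu2 P (s + 1)"
        using mu2_greater[of "s + 1" y] False by (cases "y = s + 1") auto
    qed
  qed simp
  then show ?thesis using mu2_greater[of s "s + 1"] False by simp
qed

lemma tank_balance_mu1:
  assumes "X > 0" "A - k1 P * X > 0"
  shows "tank_balance (mu1 P) (Dd P 2) X (k1 P) A"
  using C1_nonneg_continuous_on[OF H1(1)] H1(2) mu1_pos Dd_pos k1 assms
  by (intro tank_balance.intro) simp_all

lemma tank_balance_mu2: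
  assumes "X > 0" "A - k3 P * X > 0"
  shows "tank_balance (mu2 P) (Dd P 2) X (k3 P) A"
  using C1_nonneg_continuous_on[OF H2(1)] H2(2) mu2_pos Dd_pos k3 assms
  by (intro tank_balance.intro) simp_all

lemma lam1_finiteD:
  assumes "lam1 P i \<noteq> \<infinity>"
  shows "lam1 P i = ereal (L1 P i)" "0 < L1 P i" "mu1 P (L1 P i) = Dd P i"
proof -
  have reachable: "\<not> D P \<ge> rr P i * m1 P"
    using assms unfolding lam1_def by (auto split: if_splits)
  then have "Dd P i < m1 P"
    using rr_pos[of i] unfolding Dd_def by (simp add: field_simps)
  then obtain T where "\<forall>y\<ge>T. mu1 P y > Dd P i"
    using order_tendstoD(1)[OF H1(3)] unfolding eventually_at_top_linorder by blast
  then have "mu1 P (max T 0) > Dd P i" by simp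
  moreover have "continuous_on {0..max T 0} (mu1 P)"
    using C1_nonneg_continuous_on[OF H1(1)] by (rule continuous_on_subset) auto
  ultimately have "\<exists>x\<ge>0. x \<le> max T 0 \<and> mu1 P x = Dd P i"
    using H1(2) Dd_pos[of i] by (intro IVT') auto
  then obtain x where x: "0 \<le> x" "mu1 P x = Dd P i" by blast
  have "y = x" if "0 \<le> y" "mu1 P y = Dd P i" for y
    using mu1_less[of x y] mu1_less[of y x] that x by (cases x y rule: linorder_cases) auto
  then have "(THE S. 0 \<le> S \<and> mu1 P S = Dd P i) = x"
    using x by (intro the_equality) blast+
  then have "lam1 P i = ereal x" using reachable unfolding lam1_def by simp
  moreover have "x \<noteq> 0" using x H1(2) Dd_pos[of i] by auto
  ultimately show "lam1 P i = ereal (L1 P i)" "0 < L1 P i" "mu1 P (L1 P i) = Dd P i"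
    using x by auto
qed

lemma lam2_finiteD:
  assumes "lam2 P i j \<noteq> \<infinity>"
  shows "lam2 P i j = ereal (L2 P i j)" "0 < L2 P i j" "mu2 P (L2 P i j) = Dd P i"
    and "j = 1 \<Longrightarrow> L2 P i j \<le> S2m P"
proof -
  have peak: "Dd P i \<le> mu2 P (S2m P)"
    using assms rr_pos[of i] by (auto simp: lam2_def Dd_def field_simps split: if_splits)
  have mu2_cont: "continuous_on {u..v} (mu2 P)" if "0 \<le> u" for u v
    using C1_nonneg_continuous_on[OF H2(1)] by (rule continuous_on_subset) (use that in auto)
  obtain x where x: "0 < x" "mu2 P x = Dd P i" "j = 1 \<Longrightarrow> x \<le> S2m P"
    and "lam2 P i j = ereal x"
  proof (cases "j = 1")
    case True
    obtain x where x: "0 \<le> x" "x \<le> S2m P" "mu2 P x = Dd P i"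
      using IVT'[of "mu2 P" 0 "Dd P i" "S2m P"] H2(2,4) Dd_pos[of i] peak mu2_cont by force
    have "y = x" if "0 \<le> y" "y \<le> S2m P" "mu2 P y = Dd P i" for y
      using mu2_less[of x y] mu2_less[of y x] that x by (cases x y rule: linorder_cases) auto
    then have "(THE S. 0 \<le> S \<and> S \<le> S2m P \<and> mu2 P S = Dd P i) = x"
      using x by (intro the_equality) blast+
    moreover have "x \<noteq> 0" using x H2(2) Dd_pos[of i] by auto
    ultimately show thesis
      using that[of x] x True assms unfolding lam2_def by (simp split: if_splits)
  next
    case False
    obtain T where "\<forall>y\<ge>T. mu2 P y < Dd P i"
      using order_tendstoD(2)[OF H2(3) Dd_pos] unfolding eventually_at_top_linorder by blast
    then have "mu2 P (max T (S2m P)) < Dd P i" "max T (S2m P) \<ge> S2m P" by auto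
    then obtain x where x: "S2m P \<le> x" "mu2 P x = Dd P i"
      using IVT2'[of "mu2 P" "max T (S2m P)" "Dd P i" "S2m P"] peak
        mu2_cont[of "S2m P" "max T (S2m P)"] H2(4)
      by force
    have "y = x" if "S2m P \<le> y" "mu2 P y = Dd P i" for y
      using mu2_greater[of x y] mu2_greater[of y x] that x by (cases x y rule: linorder_cases) auto
    then have "(THE S. S2m P \<le> S \<and> mu2 P S = Dd P i) = x"
      using x by (intro the_equality) blast+
    then show thesis
      using that[of x] x False assms H2(4) unfolding lam2_def by (simp split: if_splits)
  qed
  then show "lam2 P i j = ereal (L2 P i j)" "0 < L2 P i j" "mu2 P (L2 P i j) = Dd P i"
    and "j = 1 \<Longrightarrow> L2 P i j \<le> S2m P"
    by auto
qed

lemma lam1_lessD: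
  assumes "lam1 P i < ereal s"
  shows "0 < L1 P i" "mu1 P (L1 P i) = Dd P i" "L1 P i < s"
proof -
  have "lam1 P i \<noteq> \<infinity>" using assms by auto
  note finite = lam1_finiteD[OF this]
  then show "0 < L1 P i" "mu1 P (L1 P i) = Dd P i" by auto
  from finite(1) assms show "L1 P i < s" by (metis less_ereal.simps(1))
qed

lemma lam2_lessD:
  assumes "lam2 P i j < ereal s"
  shows "0 < L2 P i j" "mu2 P (L2 P i j) = Dd P i" "L2 P i j < s"
proof -
  have "lam2 P i j \<noteq> \<infinity>" using assms by auto
  note finite = lam2_finiteD[OF this]
  then show "0 < L2 P i j" "mu2 P (L2 P i j) = Dd P i" by auto
  from finite(1) assms show "L2 P i j < s" by (metis less_ereal.simps(1))
qed

lemma FF_lessD: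
  assumes "FF P i j < ereal s"
  shows "lam1 P i \<noteq> \<infinity>" "lam2 P i j \<noteq> \<infinity>"
    and "real_of_ereal (FF P i j) = L1 P i + k1 P / k2 P * (L2 P i j - S2in P)"
    and "L1 P i + k1 P / k2 P * (L2 P i j - S2in P) < s"
proof -
  have cases1: "lam1 P i = \<infinity> \<or> lam1 P i = ereal (L1 P i)" unfolding lam1_def by auto
  have cases2: "lam2 P i j = \<infinity> \<or> lam2 P i j = ereal (L2 P i j)" unfolding lam2_def by auto
  show fin: "lam1 P i \<noteq> \<infinity>" "lam2 P i j \<noteq> \<infinity>"
    using assms cases1 cases2 k1 k2 by (auto simp: FF_def)
  then have l1: "lam1 P i = ereal (L1 P i)" and l2: "lam2 P i j = ereal (L2 P i j)"
    using cases1 cases2 by auto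
  have "FF P i j = ereal (L1 P i + k1 P / k2 P * (L2 P i j - S2in P))"
    unfolding FF_def by (subst l1, subst l2) simp
  then show "real_of_ereal (FF P i j) = L1 P i + k1 P / k2 P * (L2 P i j - S2in P)"
    and "L1 P i + k1 P / k2 P * (L2 P i j - S2in P) < s"
    using assms by auto
qed

lemma completions_eq_image:
  assumes "steady_prefix P a b c" "b > 0" "S2in P + k2 P * c - k3 P * b > 0"
  shows "completions P a b c =
    (\<lambda>x. (a, b, c, x)) ` tank_balance.roots (mu2 P) (Dd P 2) b (k3 P) (S2in P + k2 P * c)"
proof -
  interpret tank_balance "mu2 P" "Dd P 2" b "k3 P" "S2in P + k2 P * c"
    using tank_balance_mu2 assms(2,3) by simp
  have steady: "steady P (a, b, c, x) \<longleftrightarrow> x \<in> roots" for x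
    using steady_iff_prefix balance_iff_roots assms(1) by simp
  show ?thesis
  proof (intro set_eqI iffI)
    fix p assume "p \<in> completions P a b c"
    then show "p \<in> (\<lambda>x. (a, b, c, x)) ` roots"
      unfolding completions_def using steady by blast
  next
    fix p assume "p \<in> (\<lambda>x. (a, b, c, x)) ` roots"
    then obtain x where "p = (a, b, c, x)" "x \<in> roots" by blast
    then show "p \<in> completions P a b c"
      unfolding completions_def using steady by (auto simp: roots_def)
  qed
qed

lemma completions_nonempty:
  assumes "steady_prefix P a b c" "b > 0" "S2in P + k2 P * c - k3 P * b > 0"
  shows "completions P a b c \<noteq> {}"
proof -
  interpret tank_balance "mu2 P" "Dd P 2" b "k3 P" "S2in P + k2 P * c"
    using tank_balance_mu2 assms(2,3) by simp
  show ?thesis using completions_eq_image[OF assms] roots_nonempty by simp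
qed

lemma completions_unique:
  assumes "steady_prefix P a b c" "b > 0" "S2in P + k2 P * c - k3 P * b > 0"
    and "S2in P + k2 P * c - k3 P * b \<le> S2m P"
  shows "\<exists>!p. p \<in> completions P a b c"
proof -
  interpret tank_balance "mu2 P" "Dd P 2" b "k3 P" "S2in P + k2 P * c"
    using tank_balance_mu2 assms(2,3) by simp
  have "strict_mono_on {0..S2in P + k2 P * c - k3 P * b} (mu2 P)"
    using assms(4) by (intro monotone_on_subset[OF mu2_strict_mono_on]) auto
  moreover obtain x where "x \<in> roots" using roots_nonempty by blast
  ultimately have "roots = {x}" using roots_unique by blast
  then show ?thesis using completions_eq_image[OF assms(1-3)] by simp
qed

lemma completions_finite_odd:
  assumes "steady_prefix P a b c" "b > 0" "S2in P + k2 P * c - k3 P * b > 0"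
    and "nondeg P (completions P a b c)"
  shows "finite (completions P a b c) \<and> odd (card (completions P a b c))"
proof -
  interpret tank_balance "mu2 P" "Dd P 2" b "k3 P" "S2in P + k2 P * c"
    using tank_balance_mu2 assms(2,3) by simp
  let ?g = "\<lambda>x. mu2 P (S2in P + k2 P * c - k3 P * x) - Dd P 2 * (x - b) / x"
  note completions = completions_eq_image[OF assms(1-3)]
  have "\<exists>d. (?g has_real_derivative d) (at z) \<and> d \<noteq> 0" if "z \<in> roots" for z
  proof -
    have "deriv ?g z \<noteq> 0"
      using assms(4) that unfolding completions nondeg_def by fastforce
    moreover have "S2in P + k2 P * c - k3 P * z > 0" "z > 0"
      using that k3 assms(2) unfolding roots_def by (auto simp: field_simps)
    then have "?g differentiable (at z)"
      by (rule C1_nonneg_balance_differentiable[OF H2(1)])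
    ultimately show ?thesis using DERIV_deriv_iff_real_differentiable by blast
  qed
  then have "finite roots \<and> odd (card roots)" by (rule roots_finite_odd)
  moreover have "inj_on (\<lambda>x. (a, b, c, x)) roots" by (auto simp: inj_on_def)
  ultimately show ?thesis unfolding completions by (simp add: card_image)
qed

lemma E00_00_unique: "\<exists>!p. p \<in> E00_00 P"
proof -
  have "steady P (0, 0, 0, 0)" unfolding steady_def using S1 S2 by simp
  then show ?thesis unfolding E00_00_def by auto
qed

lemma E00_0_unique:
  assumes "lam2 P 2 i < ereal (S2in P)"
  shows "\<exists>!p. p \<in> E00_0 P i"
proof -
  note L = lam2_lessD[OF assms]
  define x where "x = (S2in P - L2 P 2 i) / k3 P"
  have "S2in P - k3 P * x = L2 P 2 i" "0 \<le> x" using k3 L unfolding x_def by (auto simp: field_simps)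
  then have "steady P (0, 0, 0, x)" unfolding steady_def using S1 L by (simp add: algebra_simps)
  then show ?thesis unfolding E00_0_def x_def by auto
qed

lemma E00_10_unique:
  assumes "lam1 P 2 < ereal (S1in P)"
  shows "\<exists>!p. p \<in> E00_10 P"
proof -
  note L = lam1_lessD[OF assms]
  define x where "x = (S1in P - L1 P 2) / k1 P"
  have "S1in P - k1 P * x = L1 P 2" "0 \<le> x" using k1 L unfolding x_def by (auto simp: field_simps)
  moreover have "0 \<le> S2in P + k2 P * x" using S2 k2 \<open>0 \<le> x\<close> by simp
  ultimately have "steady P (0, 0, x, 0)" unfolding steady_def using S1 S2 L by (simp add: algebra_simps)
  then show ?thesis unfolding E00_10_def x_def by auto
qed

lemma E00_1_unique:
  assumes "max (lam1 P 2) (FF P 2 i) < ereal (S1in P)"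
  shows "\<exists>!p. p \<in> E00_1 P i"
proof -
  have "lam1 P 2 < ereal (S1in P)" "FF P 2 i < ereal (S1in P)" using assms by auto
  note L = lam1_lessD[OF this(1)] and F = FF_lessD[OF this(2)]
  note M = lam2_finiteD[OF F(2)]
  define x where "x = (S1in P - L1 P 2) / k1 P"
  define y where "y = k2 P * (S1in P - real_of_ereal (FF P 2 i)) / (k1 P * k3 P)"
  have x: "S1in P - k1 P * x = L1 P 2" "0 \<le> x" using k1 L unfolding x_def by (auto simp: field_simps)
  have "0 \<le> y" using F(3,4) k1 k2 k3 unfolding y_def by (auto intro!: divide_nonneg_pos)
  moreover have "S2in P + k2 P * x - k3 P * y = L2 P 2 i"
    using k1 k2 k3 unfolding x_def y_def F(3) by (simp add: field_simps)
  moreover have "0 \<le> S2in P + k2 P * x" using S2 k2 x by simp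
  ultimately have "steady P (0, 0, x, y)"
    unfolding steady_def using S1 S2 x L M by (simp add: algebra_simps)
  then show ?thesis unfolding E00_1_def x_def y_def by auto
qed

lemma X11s_steady:
  assumes "lam1 P 1 < ereal (S1in P)"
  shows "X11s P > 0" "S1in P - k1 P * X11s P = L1 P 1" "mu1 P (L1 P 1) = Dd P 1"
  using lam1_lessD[OF assms] k1 unfolding X11s_def by (auto simp: field_simps)

abbreviation X12_roots :: "real set" where
  "X12_roots \<equiv> tank_balance.roots (mu1 P) (Dd P 2) (X11s P) (k1 P) (S1in P)"

lemma tank_balance_X12:
  assumes "lam1 P 1 < ereal (S1in P)"
  shows "tank_balance (mu1 P) (Dd P 2) (X11s P) (k1 P) (S1in P)"
  using tank_balance_mu1 X11s_steady[OF assms] lam1_lessD(1)[OF assms] by simp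

lemma X12_roots_singleton:
  assumes "lam1 P 1 < ereal (S1in P)"
  obtains y where "X12_roots = {y}"
proof -
  interpret tank_balance "mu1 P" "Dd P 2" "X11s P" "k1 P" "S1in P"
    using tank_balance_X12[OF assms] .
  have "strict_mono_on {0..S1in P - k1 P * X11s P} (mu1 P)"
    by (intro monotone_on_subset[OF mu1_strict_mono_on]) auto
  moreover obtain y where "y \<in> roots" using roots_nonempty by blast
  ultimately show thesis using that roots_unique by blast
qed

lemma steady_prefix_X11s_iff:
  assumes "lam1 P 1 < ereal (S1in P)"
    and "0 \<le> b" "0 \<le> S2in P + k2 P * X11s P - k3 P * b"
      "(mu2 P (S2in P + k2 P * X11s P - k3 P * b) - Dd P 1) * b = 0"
  shows "steady_prefix P (X11s P) b y \<longleftrightarrow> y \<in> X12_roots"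
proof -
  interpret tank_balance "mu1 P" "Dd P 2" "X11s P" "k1 P" "S1in P"
    using tank_balance_X12[OF assms(1)] .
  show ?thesis
    using balance_iff_roots[of y] X11s_steady[OF assms(1)] lam1_lessD(1)[OF assms(1)] assms(2-4)
    unfolding steady_prefix_def by auto
qed

lemma E10_10_eq_image:
  assumes "lam1 P 1 < ereal (S1in P)"
  shows "E10_10 P = (\<lambda>y. (X11s P, 0, y, 0)) ` X12_roots"
proof -
  note X = X11s_steady[OF assms]
  note roots_def = tank_balance.roots_def[OF tank_balance_X12[OF assms]]
  have prefix: "steady_prefix P (X11s P) 0 y \<longleftrightarrow> y \<in> X12_roots" for y
    using steady_prefix_X11s_iff[OF assms] X S2 k2 by simp
  have steady: "steady P (X11s P, 0, y, 0) \<longleftrightarrow> y \<in> X12_roots" for y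
  proof -
    have "y \<in> X12_roots \<Longrightarrow> 0 \<le> S2in P + k2 P * y"
      using X S2 k2 unfolding roots_def by simp
    then show ?thesis unfolding steady_iff_prefix prefix by auto
  qed
  show ?thesis
  proof (intro set_eqI iffI)
    fix p :: "real \<times> real \<times> real \<times> real"
    assume "p \<in> E10_10 P"
    then show "p \<in> (\<lambda>y. (X11s P, 0, y, 0)) ` X12_roots"
      unfolding E10_10_def using steady by blast
  next
    fix p :: "real \<times> real \<times> real \<times> real"
    assume "p \<in> (\<lambda>y. (X11s P, 0, y, 0)) ` X12_roots"
    then obtain y where "p = (X11s P, 0, y, 0)" "y \<in> X12_roots" by blast
    moreover from this(2) have "mu1 P (S1in P - k1 P * y) = Dd P 2 * (y - X11s P) / y"
      unfolding roots_def by simp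
    ultimately show "p \<in> E10_10 P" unfolding E10_10_def using steady by blast
  qed
qed

lemma E10_10_unique:
  assumes "lam1 P 1 < ereal (S1in P)"
  shows "\<exists>!p. p \<in> E10_10 P"
proof -
  obtain y where "X12_roots = {y}" using X12_roots_singleton[OF assms] .
  then show ?thesis using E10_10_eq_image[OF assms] by simp
qed

lemma E10_1_unique:
  assumes "lam1 P 1 < ereal (S1in P)"
    and "\<forall>(x11, x21, x12, x22) \<in> E10_10 P. ereal (S2in P + k2 P * x12) > lam2 P 2 i"
  shows "\<exists>!p. p \<in> E10_1 P i"
proof -
  note X = X11s_steady[OF assms(1)]
  obtain y where y: "X12_roots = {y}" using X12_roots_singleton[OF assms(1)] .
  then have "(X11s P, 0, y, 0) \<in> E10_10 P" using E10_10_eq_image[OF assms(1)] by simp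
  then have "lam2 P 2 i < ereal (S2in P + k2 P * y)" using assms(2) by blast
  note L = lam2_lessD[OF this]
  define x where "x = (S2in P + k2 P * y - L2 P 2 i) / k3 P"
  have x: "S2in P + k2 P * y - k3 P * x = L2 P 2 i" "0 \<le> x"
    using k3 L unfolding x_def by (auto simp: field_simps)
  have prefix: "steady_prefix P (X11s P) 0 y' \<longleftrightarrow> y' = y" for y'
    using steady_prefix_X11s_iff[OF assms(1), of 0 y'] X S2 k2 y by simp
  have "steady P (X11s P, 0, y, x)"
    unfolding steady_iff_prefix prefix using x L by simp
  moreover have "y \<in> X12_roots" using y by simp
  then have "mu1 P (S1in P - k1 P * y) = Dd P 2 * (y - X11s P) / y"
    unfolding tank_balance.roots_def[OF tank_balance_X12[OF assms(1)]] by simp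
  ultimately have "(X11s P, 0, y, x) \<in> E10_1 P i" unfolding E10_1_def x_def by blast
  moreover have "p = (X11s P, 0, y, x)" if p_in: "p \<in> E10_1 P i" for p
  proof -
    obtain y' where p: "p = (X11s P, 0, y', (S2in P + k2 P * y' - L2 P 2 i) / k3 P)" "steady P p"
      using p_in unfolding E10_1_def by blast
    then have "steady_prefix P (X11s P) 0 y'" using steady_iff_prefix by simp
    then show ?thesis using p prefix unfolding x_def by simp
  qed
  ultimately show ?thesis by blast
qed

lemma E0_01_completions:
  assumes "lam2 P 1 i < ereal (S2in P)"
  defines "b \<equiv> (S2in P - L2 P 1 i) / k3 P"
  shows "E0_01 P i = completions P 0 b 0" "steady_prefix P 0 b 0" "b > 0"
    and "S2in P + k2 P * 0 - k3 P * b = L2 P 1 i" "S2in P + k2 P * 0 - k3 P * b > 0"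
proof -
  note L = lam2_lessD[OF assms(1)]
  show substrate: "S2in P + k2 P * 0 - k3 P * b = L2 P 1 i"
    using k3 unfolding b_def by (simp add: field_simps)
  then show "steady_prefix P 0 b 0" "b > 0" "S2in P + k2 P * 0 - k3 P * b > 0"
    using L S1 k3 unfolding steady_prefix_def b_def by (auto simp: field_simps)
  show "E0_01 P i = completions P 0 b 0" unfolding E0_01_def completions_def b_def by simp
qed

lemma E0_01_nonempty: "lam2 P 1 i < ereal (S2in P) \<Longrightarrow> \<exists>p. p \<in> E0_01 P i"
  using completions_nonempty[OF E0_01_completions(2,3,5)] E0_01_completions(1) by blast

lemma E0_01_finite_odd:
  assumes "lam2 P 1 i < ereal (S2in P)" "nondeg P (E0_01 P i)"
  shows "finite (E0_01 P i) \<and> odd (card (E0_01 P i))"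
  using completions_finite_odd[OF E0_01_completions(2,3,5)[OF assms(1)]] assms(2)
  unfolding E0_01_completions(1)[OF assms(1)] by blast

lemma E0_01_unique:
  assumes "lam2 P 1 1 < ereal (S2in P)"
  shows "\<exists>!p. p \<in> E0_01 P 1"
proof -
  have "lam2 P 1 1 \<noteq> \<infinity>" using assms by auto
  then have "L2 P 1 1 \<le> S2m P" by (rule lam2_finiteD(4)) simp
  then show ?thesis
    using completions_unique[OF E0_01_completions(2,3,5)[OF assms]] E0_01_completions(1,4)[OF assms]
    by simp
qed

lemma E0_11_completions:
  assumes "lam1 P 2 < ereal (S1in P)" "lam2 P 1 i < ereal (S2in P)"
  defines "b \<equiv> (S2in P - L2 P 1 i) / k3 P" and "c \<equiv> (S1in P - L1 P 2) / k1 P"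
  shows "E0_11 P i = completions P 0 b c" "steady_prefix P 0 b c" "b > 0"
    and "S2in P + k2 P * c - k3 P * b > 0"
proof -
  note L1 = lam1_lessD[OF assms(1)] and L2 = lam2_lessD[OF assms(2)]
  have b: "b > 0" "S2in P - k3 P * b = L2 P 1 i"
    using L2 k3 unfolding b_def by (auto simp: field_simps)
  have c: "c > 0" "S1in P - k1 P * c = L1 P 2"
    using L1 k1 unfolding c_def by (auto simp: field_simps)
  show "b > 0" using b by simp
  show "steady_prefix P 0 b c"
    using b c L1 L2 S1 unfolding steady_prefix_def by simp
  have "k2 P * c > 0" using k2 c by simp
  then show "S2in P + k2 P * c - k3 P * b > 0" using b L2 by linarith
  show "E0_11 P i = completions P 0 b c" unfolding E0_11_def completions_def b_def c_def by simp
qed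

lemma E0_11_nonempty:
  "lam1 P 2 < ereal (S1in P) \<Longrightarrow> lam2 P 1 i < ereal (S2in P) \<Longrightarrow> \<exists>p. p \<in> E0_11 P i"
  using completions_nonempty[OF E0_11_completions(2-4)] E0_11_completions(1) by blast

lemma E0_11_finite_odd:
  assumes "lam1 P 2 < ereal (S1in P)" "lam2 P 1 i < ereal (S2in P)" "nondeg P (E0_11 P i)"
  shows "finite (E0_11 P i) \<and> odd (card (E0_11 P i))"
  using completions_finite_odd[OF E0_11_completions(2-4)[OF assms(1,2)]] assms(3)
  unfolding E0_11_completions(1)[OF assms(1,2)] by blast

lemma E0_11_unique:
  assumes "lam1 P 2 < ereal (S1in P)" "lam2 P 1 i < ereal (S2in P)"
    and "(S2in P - L2 P 1 i) / k3 P > x2m P ((S1in P - L1 P 2) / k1 P)"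
  shows "\<exists>!p. p \<in> E0_11 P i"
  using completions_unique[OF E0_11_completions(2-4)[OF assms(1,2)]] assms(3) k3
  unfolding E0_11_completions(1)[OF assms(1,2)] x2m_less_iff[OF k3] by simp

lemma E1_11_completions:
  assumes "max (lam1 P 1) (FF P 1 i) < ereal (S1in P)"
  obtains y where "E1_11 P i = completions P (X11s P) (X21s P i) y"
    and "steady_prefix P (X11s P) (X21s P i) y"
    and "X21s P i > 0" "S2in P + k2 P * y - k3 P * X21s P i > 0"
proof -
  define b where "b = X21s P i"
  have a1: "lam1 P 1 < ereal (S1in P)" and a2: "FF P 1 i < ereal (S1in P)" using assms(1) by auto
  note X = X11s_steady[OF a1] and F = FF_lessD[OF a2]
  note L = lam2_finiteD[OF F(2)]
  have b: "b > 0" using F(3,4) k1 k2 k3 unfolding b_def X21s_def by (auto intro!: divide_pos_pos)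
  have substrate: "S2in P + k2 P * X11s P - k3 P * b = L2 P 1 i"
    using k1 k2 k3 unfolding b_def X21s_def F(3) X11s_def by (simp add: field_simps)
  obtain y where y: "X12_roots = {y}" using X12_roots_singleton[OF a1] .
  have prefix: "steady_prefix P (X11s P) b y' \<longleftrightarrow> y' = y" for y'
    using steady_prefix_X11s_iff[OF a1, of b y'] b substrate L y by simp
  have "y \<in> X12_roots" using y by simp
  then have y_root: "X11s P < y" "mu1 P (S1in P - k1 P * y) = Dd P 2 * (y - X11s P) / y"
    unfolding tank_balance.roots_def[OF tank_balance_X12[OF a1]] by simp_all
  have "E1_11 P i = completions P (X11s P) b y"
  proof (intro set_eqI iffI)
    fix p assume "p \<in> E1_11 P i"
    then obtain y' x where p: "steady P p" "p = (X11s P, b, y', x)"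
        "mu2 P (S2in P + k2 P * y' - k3 P * x) = Dd P 2 * (x - b) / x"
      unfolding E1_11_def b_def X21s_def by blast
    then have "y' = y" using prefix steady_iff_prefix by simp
    then show "p \<in> completions P (X11s P) b y" using p unfolding completions_def by blast
  next
    fix p assume "p \<in> completions P (X11s P) b y"
    then show "p \<in> E1_11 P i" using y_root(2) unfolding completions_def E1_11_def b_def X21s_def by blast
  qed
  moreover have "k2 P * X11s P < k2 P * y" using k2 y_root(1) by simp
  then have "S2in P + k2 P * y - k3 P * b > 0" using substrate L(2) by linarith
  ultimately show thesis using that b prefix unfolding b_def by blast
qed

lemma E1_11_nonempty: "max (lam1 P 1) (FF P 1 i) < ereal (S1in P) \<Longrightarrow> \<exists>p. p \<in> E1_11 P i"
  by (metis E1_11_completions completions_nonempty ex_in_conv)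

lemma E1_11_finite_odd:
  assumes "max (lam1 P 1) (FF P 1 i) < ereal (S1in P)" "nondeg P (E1_11 P i)"
  shows "finite (E1_11 P i) \<and> odd (card (E1_11 P i))"
  by (metis E1_11_completions[OF assms(1)] completions_finite_odd assms(2))

lemma E1_11_unique:
  assumes "max (lam1 P 1) (FF P 1 i) < ereal (S1in P)"
    and "\<forall>(x11, x21, x12, x22) \<in> E1_11 P i. x21 > x2m P x12"
  shows "\<exists>!p. p \<in> E1_11 P i"
proof -
  obtain y where E: "E1_11 P i = completions P (X11s P) (X21s P i) y"
    and C: "steady_prefix P (X11s P) (X21s P i) y" "X21s P i > 0"
      "S2in P + k2 P * y - k3 P * X21s P i > 0"
    using E1_11_completions[OF assms(1)] by blast
  obtain p where "p \<in> E1_11 P i" using completions_nonempty[OF C] E by blast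
  then obtain x where "(X11s P, X21s P i, y, x) \<in> E1_11 P i"
    unfolding E completions_def by blast
  then have "S2in P + k2 P * y - k3 P * X21s P i < S2m P"
    using assms(2) x2m_less_iff[OF k3] by fastforce
  then show ?thesis using completions_unique[OF C] E by simp
qed

end

theorem proposition3p2:
  fixes P :: cparams
  assumes k1: "k1 P > 0" and k2: "k2 P > 0" and k3: "k3 P > 0"
    and D: "D P > 0" and r: "0 < r P" "r P < 1"
    and S1: "S1in P \<ge> 0" and S2: "S2in P \<ge> 0"
    and H1: "C1_nonneg (mu1 P)" "mu1 P 0 = 0" "(mu1 P \<longlongrightarrow> m1 P) at_top"
            "\<forall>x>0. deriv (mu1 P) x > 0"
    and H2: "C1_nonneg (mu2 P)" "mu2 P 0 = 0" "(mu2 P \<longlongrightarrow> 0) at_top" "S2m P > 0"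
            "\<forall>x. 0 < x \<and> x < S2m P \<longrightarrow> deriv (mu2 P) x > 0"
            "\<forall>x. x > S2m P \<longrightarrow> deriv (mu2 P) x < 0"
  shows
    "(\<exists>!p. p \<in> E00_00 P)
   \<and> (\<forall>i\<in>{1,2}. ereal (S2in P) > lam2 P 2 i \<longrightarrow> (\<exists>!p. p \<in> E00_0 P i))
   \<and> (ereal (S1in P) > lam1 P 2 \<longrightarrow> (\<exists>!p. p \<in> E00_10 P))
   \<and> (\<forall>i\<in>{1,2}. ereal (S1in P) > max (lam1 P 2) (FF P 2 i) \<longrightarrow> (\<exists>!p. p \<in> E00_1 P i))
   \<and> (ereal (S1in P) > lam1 P 1 \<longrightarrow> (\<exists>!p. p \<in> E10_10 P))
   \<and> (\<forall>i\<in>{1,2}. ereal (S1in P) > lam1 P 1 \<and>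
        (\<forall>(x11, x21, x12, x22) \<in> E10_10 P. ereal (S2in P + k2 P * x12) > lam2 P 2 i)
        \<longrightarrow> (\<exists>!p. p \<in> E10_1 P i))
   \<and> (ereal (S2in P) > lam2 P 1 1 \<longrightarrow> (\<exists>!p. p \<in> E0_01 P 1))
   \<and> (ereal (S2in P) > lam2 P 1 2 \<longrightarrow>
        (\<exists>p. p \<in> E0_01 P 2) \<and>
        (nondeg P (E0_01 P 2) \<longrightarrow> finite (E0_01 P 2) \<and> odd (card (E0_01 P 2))))
   \<and> (\<forall>i\<in>{1,2}. ereal (S1in P) > lam1 P 2 \<and> ereal (S2in P) > lam2 P 1 i \<longrightarrow>
        (((S2in P - L2 P 1 i) / k3 P > x2m P ((S1in P - L1 P 2) / k1 P)
            \<longrightarrow> (\<exists>!p. p \<in> E0_11 P i))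
       \<and> ((S2in P - L2 P 1 i) / k3 P < x2m P ((S1in P - L1 P 2) / k1 P)
            \<longrightarrow> (\<exists>p. p \<in> E0_11 P i) \<and>
                (nondeg P (E0_11 P i) \<longrightarrow> finite (E0_11 P i) \<and> odd (card (E0_11 P i))))))
   \<and> (\<forall>i\<in>{1,2}. ereal (S1in P) > max (lam1 P 1) (FF P 1 i) \<longrightarrow>
        (((\<forall>(x11, x21, x12, x22) \<in> E1_11 P i. x21 > x2m P x12)
            \<longrightarrow> (\<exists>!p. p \<in> E1_11 P i))
       \<and> ((\<forall>(x11, x21, x12, x22) \<in> E1_11 P i. x21 < x2m P x12)
            \<longrightarrow> (\<exists>p. p \<in> E1_11 P i) \<and>
                (nondeg P (E1_11 P i) \<longrightarrow> finite (E1_11 P i) \<and> odd (card (E1_11 P i))))))"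
proof -
  interpret chemostat P using assms by (simp add: chemostat_def)
  show ?thesis
  proof (intro conjI ballI impI)
  qed (use E00_00_unique E00_0_unique E00_10_unique E00_1_unique E10_10_unique E10_1_unique
      E0_01_unique E0_01_nonempty E0_01_finite_odd E0_11_unique E0_11_nonempty E0_11_finite_odd
      E1_11_unique E1_11_nonempty E1_11_finite_odd in metis)+
qed

end
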